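(* There exists a task in the two-party one-way communication (Holevo–Frenkel–Weiner) scenario for which the utility of one qubit of communication (with no pre-shared correlation) is higher than the utility of one classical bit of communication assisted by $1$ bit of shared randomness: there exist finite sets $\mathcal{X},\mathcal{B}$ and a payoff function $\beta$ such that $\sup_{P\in\mathcal{Q}}\beta(P)>\sup_{P\in\mathcal{C}_2}\beta(P)$.
   Context: Scenario: Alice receives an input $x$ from a finite set $\mathcal{X}$, Bob must output $b$ from a finite set $\mathcal{B}$; a correlation is $P=(P(b|x))$, a task is a real payoff function $\beta$ on correlations, and the utility of a resource is $\sup\beta(P)$ over correlations achievable with it. $\mathcal{C}$: correlations $P(b|x)=\sum_{m\in\{0,1\}}E(m|x)D(b|m)$ with $E(\cdot|x)$ a probability distribution on $\{0,1\}$ for each $x$ and $D(\cdot|m)$ a probability distribution on $\mathcal{B}$ for each $m$. $\mathcal{C}_2$ (one classical bit plus $1$ bit of shared randomness): correlations $qP_0+(1-q)P_1$ with $q\in[0,1]$ and $P_0,P_1\in\mathcal{C}$. $\mathcal{Q}$ (one qubit, no shared correlation): correlations $P(b|x)=\operatorname{Tr}(\rho_x\pi_b)$ with each $\rho_x$ a density operator on $\mathbb{C}^2$ and $\{\pi_b\}_{b\in\mathcal{B}}$ a POVM on $\mathbb{C}^2$. *)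

theory Defs
  imports "HOL-Analysis.Analysis"
begin

text \<open>Correlations P(b|x) are represented as functions P b x :: real, with the
 (harmless) convention that P b x = 0 outside B \<times> X, so that each correlation on
 (X,B) has a unique representative.\<close>

type_synonym corr = "nat \<Rightarrow> nat \<Rightarrow> real"

definition prob_dist :: "nat set \<Rightarrow> (nat \<Rightarrow> real) \<Rightarrow> bool" where
  "prob_dist S p \<longleftrightarrow> (\<forall>s\<in>S. 0 \<le> p s) \<and> (\<Sum>s\<in>S. p s) = 1"

text \<open>C: one classical bit, no shared randomness. E m x = E(m|x), D b m = D(b|m).\<close>
definition C_corr :: "nat set \<Rightarrow> nat set \<Rightarrow> corr set" where
  "C_corr X B = {P. \<exists>E D.
      (\<forall>x\<in>X. prob_dist {0,1} (\<lambda>m. E m x)) \<and>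
      (\<forall>m\<in>{0,1}. prob_dist B (\<lambda>b. D b m)) \<and>
      P = (\<lambda>b x. if b \<in> B \<and> x \<in> X then (\<Sum>m\<in>{0::nat,1}. E m x * D b m) else 0)}"

text \<open>C_2: one classical bit plus one bit of shared randomness.\<close>
definition C2_corr :: "nat set \<Rightarrow> nat set \<Rightarrow> corr set" where
  "C2_corr X B = {P. \<exists>q::real. 0 \<le> q \<and> q \<le> 1 \<and>
      (\<exists>P0\<in>C_corr X B. \<exists>P1\<in>C_corr X B. P = (\<lambda>b x. q * P0 b x + (1 - q) * P1 b x))}"

definition hermitian2 :: "complex^2^2 \<Rightarrow> bool" where
  "hermitian2 A \<longleftrightarrow> (\<forall>i j. A $ i $ j = cnj (A $ j $ i))"

definition psd2 :: "complex^2^2 \<Rightarrow> bool" where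
  "psd2 A \<longleftrightarrow> hermitian2 A \<and>
     (\<forall>v::complex^2. 0 \<le> Re (\<Sum>i\<in>UNIV. \<Sum>j\<in>UNIV. cnj (v $ i) * A $ i $ j * v $ j))"

definition density2 :: "complex^2^2 \<Rightarrow> bool" where
  "density2 \<rho> \<longleftrightarrow> psd2 \<rho> \<and> trace \<rho> = 1"

definition povm2 :: "nat set \<Rightarrow> (nat \<Rightarrow> complex^2^2) \<Rightarrow> bool" where
  "povm2 B \<pi> \<longleftrightarrow> (\<forall>b\<in>B. psd2 (\<pi> b)) \<and> (\<Sum>b\<in>B. \<pi> b) = mat 1"

text \<open>Q: one qubit, no shared correlation. P(b|x) = Tr(rho_x pi_b) (real for psd operators).\<close>
definition Q_corr :: "nat set \<Rightarrow> nat set \<Rightarrow> corr set" where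
  "Q_corr X B = {P. \<exists>\<rho> \<pi>.
      (\<forall>x\<in>X. density2 (\<rho> x)) \<and> povm2 B \<pi> \<and>
      P = (\<lambda>b x. if b \<in> B \<and> x \<in> X then Re (trace (\<rho> x ** \<pi> b)) else 0)}"

text \<open>Utility of a resource for task beta: sup of beta over achievable correlations
 (in the extended reals, since an arbitrary payoff need not be bounded).\<close>
definition utility :: "corr set \<Rightarrow> (corr \<Rightarrow> real) \<Rightarrow> ereal" where
  "utility S \<beta> = (SUP P\<in>S. ereal (\<beta> P))"

end

theory Submission
  imports Defs
begin

text \<open>A strategy in \<open>C\<^sub>2\<close> makes every \<open>P(b|x)\<close> affine in the two numbers \<open>E\<^sub>0(0|x)\<close>,
 \<open>E\<^sub>1(0|x)\<close> (Alice's probability of sending 0 in either branch of the shared randomness).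
 Hence the increments \<open>P(b|x) - P(b|x\<^sub>0)\<close>, viewed as a matrix indexed by \<open>x\<close> and \<open>b\<close>,
 have rank at most 2 and all their 3\<times>3 minors vanish. Sending one of \<open>|0\<rangle>, |1\<rangle>, |+\<rangle>, |+i\<rangle>\<close>
 and measuring the six-outcome POVM made of the Pauli eigenprojectors scaled by 1/3 yields a
 correlation with a 3\<times>3 increment minor equal to 1/108. The indicator function of this
 correlation is a task on which one qubit beats \<open>C\<^sub>2\<close>.\<close>

definition minor3 :: "(nat \<Rightarrow> nat \<Rightarrow> real) \<Rightarrow> nat \<Rightarrow> nat \<Rightarrow> nat \<Rightarrow> nat \<Rightarrow> nat \<Rightarrow> nat \<Rightarrow> real" where
  "minor3 M r1 r2 r3 c1 c2 c3 =
     M r1 c1 * (M r2 c2 * M r3 c3 - M r2 c3 * M r3 c2)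
   - M r1 c2 * (M r2 c1 * M r3 c3 - M r2 c3 * M r3 c1)
   + M r1 c3 * (M r2 c1 * M r3 c2 - M r2 c2 * M r3 c1)"

lemma minor3_rank2:
  assumes "\<And>r c. r \<in> {r1, r2, r3} \<Longrightarrow> c \<in> {c1, c2, c3} \<Longrightarrow> M r c = g r * U c + h r * V c"
  shows "minor3 M r1 r2 r3 c1 c2 c3 = 0"
proof -
  have "minor3 M r1 r2 r3 c1 c2 c3 = minor3 (\<lambda>r c. g r * U c + h r * V c) r1 r2 r3 c1 c2 c3"
    unfolding minor3_def using assms by simp
  also have "\<dots> = 0"
    unfolding minor3_def by algebra
  finally show ?thesis .
qed

lemma C_corr_affine:
  assumes "P \<in> C_corr X B"
  shows "\<exists>K e U. \<forall>x\<in>X. \<forall>b\<in>B. P b x = K b + e x * U b"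
proof -
  obtain E D where E: "\<forall>x\<in>X. prob_dist {0,1} (\<lambda>m. E m x)"
    and P: "P = (\<lambda>b x. if b \<in> B \<and> x \<in> X then (\<Sum>m\<in>{0::nat,1}. E m x * D b m) else 0)"
    using assms unfolding C_corr_def by blast
  have "P b x = D b 1 + E 0 x * (D b 0 - D b 1)" if "x \<in> X" "b \<in> B" for x b
  proof -
    have "P b x = E 0 x * D b 0 + E 1 x * D b 1" using that unfolding P by simp
    also have "E 1 x = 1 - E 0 x" using E that unfolding prob_dist_def by auto
    finally show ?thesis by (simp add: algebra_simps)
  qed
  then show ?thesis
    by (intro exI[of _ "\<lambda>b. D b 1"] exI[of _ "\<lambda>x. E 0 x"] exI[of _ "\<lambda>b. D b 0 - D b 1"]) blast
qed

lemma C2_corr_affine2: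
  assumes "P \<in> C2_corr X B"
  shows "\<exists>K e U f V. \<forall>x\<in>X. \<forall>b\<in>B. P b x = K b + e x * U b + f x * V b"
proof -
  obtain q P0 P1 where P0: "P0 \<in> C_corr X B" and P1: "P1 \<in> C_corr X B"
    and P: "P = (\<lambda>b x. q * P0 b x + (1 - q) * P1 b x)"
    using assms unfolding C2_corr_def by auto
  obtain K0 e0 U0 where P0_affine: "\<forall>x\<in>X. \<forall>b\<in>B. P0 b x = K0 b + e0 x * U0 b"
    using C_corr_affine[OF P0] by blast
  obtain K1 e1 U1 where P1_affine: "\<forall>x\<in>X. \<forall>b\<in>B. P1 b x = K1 b + e1 x * U1 b"
    using C_corr_affine[OF P1] by blast
  have "\<forall>x\<in>X. \<forall>b\<in>B.
          P b x = (q * K0 b + (1 - q) * K1 b) + e0 x * (q * U0 b) + e1 x * ((1 - q) * U1 b)"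
    using P0_affine P1_affine unfolding P by (simp add: algebra_simps)
  then show ?thesis
    by (intro exI[of _ "\<lambda>b. q * K0 b + (1 - q) * K1 b"] exI[of _ e0] exI[of _ "\<lambda>b. q * U0 b"]
        exI[of _ e1] exI[of _ "\<lambda>b. (1 - q) * U1 b"])
qed

lemma C2_corr_increment_minor3:
  assumes "P \<in> C2_corr X B" "x0 \<in> X" "x1 \<in> X" "x2 \<in> X" "x3 \<in> X" "b1 \<in> B" "b2 \<in> B" "b3 \<in> B"
  shows "minor3 (\<lambda>x b. P b x - P b x0) x1 x2 x3 b1 b2 b3 = 0"
proof -
  obtain K e U f V where P: "\<forall>x\<in>X. \<forall>b\<in>B. P b x = K b + e x * U b + f x * V b"
    using C2_corr_affine2[OF assms(1)] by blast
  show ?thesis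
  proof (rule minor3_rank2)
    fix x b assume "x \<in> {x1, x2, x3}" "b \<in> {b1, b2, b3}"
    then have "x \<in> X" "b \<in> B" using assms(3-) by auto
    then show "P b x - P b x0 = (e x - e x0) * U b + (f x - f x0) * V b"
      using P assms(2) by (simp add: algebra_simps)
  qed
qed

lemma utility_indicator_less:
  assumes "P \<in> S" "P \<notin> T"
  shows "utility T (\<lambda>Q. if Q = P then 1 else 0) < utility S (\<lambda>Q. if Q = P then 1 else 0)"
proof -
  have "utility T (\<lambda>Q. if Q = P then 1 else 0) \<le> 0"
    unfolding utility_def using assms(2) by (auto intro!: SUP_least)
  also have "(0::ereal) < 1" by simp
  also have "1 \<le> utility S (\<lambda>Q. if Q = P then 1 else 0)"
    unfolding utility_def by (rule order_trans[OF _ SUP_upper[OF assms(1)]]) simp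
  finally show ?thesis .
qed

definition scaled_proj :: "real \<Rightarrow> complex \<Rightarrow> complex \<Rightarrow> complex^2^2" where
  "scaled_proj w a b = (\<chi> i j. complex_of_real w * vector [a, b] $ i * cnj (vector [a, b] $ j))"

lemma scaled_proj_nth:
  "scaled_proj w a b $ i $ j = complex_of_real w * vector [a, b] $ i * cnj (vector [a, b] $ j)"
  by (simp add: scaled_proj_def)

lemma psd2_scaled_proj:
  assumes "0 \<le> w"
  shows "psd2 (scaled_proj w a b)"
proof -
  have "hermitian2 (scaled_proj w a b)"
    unfolding hermitian2_def scaled_proj_nth by simp
  moreover have "0 \<le> Re (\<Sum>i\<in>UNIV. \<Sum>j\<in>UNIV. cnj (v $ i) * scaled_proj w a b $ i $ j * v $ j)"
    for v :: "complex^2"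
  proof -
    define z where "z = cnj a * v $ 1 + cnj b * v $ 2"
    have "(\<Sum>i\<in>UNIV. \<Sum>j\<in>UNIV. cnj (v $ i) * scaled_proj w a b $ i $ j * v $ j)
        = complex_of_real w * (z * cnj z)"
      unfolding z_def sum_2 scaled_proj_nth by (simp add: algebra_simps)
    also have "\<dots> = complex_of_real (w * ((Re z)\<^sup>2 + (Im z)\<^sup>2))"
      by (simp add: complex_mult_cnj)
    finally show ?thesis using assms by simp
  qed
  ultimately show ?thesis unfolding psd2_def by blast
qed

lemma trace_scaled_proj:
  "trace (scaled_proj w a b) = complex_of_real w * (a * cnj a + b * cnj b)"
  unfolding trace_def sum_2 scaled_proj_nth by (simp add: algebra_simps)

lemma trace_scaled_proj_mult:
  "trace (scaled_proj w a b ** scaled_proj u c d)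
     = complex_of_real (w * u) * ((cnj a * c + cnj b * d) * (a * cnj c + b * cnj d))"
  unfolding trace_def matrix_matrix_mult_def sum_2 scaled_proj_nth by (simp add: algebra_simps)

definition qubit_state :: "nat \<Rightarrow> complex^2^2" where
  "qubit_state x =
     (if x = 0 then scaled_proj 1 1 0 else if x = 1 then scaled_proj 1 0 1
      else if x = 2 then scaled_proj (1/2) 1 1 else scaled_proj (1/2) 1 \<i>)"

definition pauli_povm :: "nat \<Rightarrow> complex^2^2" where
  "pauli_povm b =
     (if b = 0 then scaled_proj (1/3) 1 0 else if b = 1 then scaled_proj (1/3) 0 1
      else if b = 2 then scaled_proj (1/6) 1 1 else if b = 3 then scaled_proj (1/6) 1 (-1)
      else if b = 4 then scaled_proj (1/6) 1 \<i> else scaled_proj (1/6) 1 (-\<i>))"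

definition inputs :: "nat set" where "inputs = {0, 1, 2, 3}"

definition outputs :: "nat set" where "outputs = {0, 1, 2, 3, 4, 5}"

definition pauli_corr :: corr where
  "pauli_corr = (\<lambda>b x. if b \<in> outputs \<and> x \<in> inputs
                        then Re (trace (qubit_state x ** pauli_povm b)) else 0)"

lemma pauli_corr_in_Q_corr: "pauli_corr \<in> Q_corr inputs outputs"
proof -
  have "density2 (qubit_state x)" for x
    unfolding density2_def qubit_state_def by (auto simp: psd2_scaled_proj trace_scaled_proj)
  moreover have "povm2 outputs pauli_povm"
  proof -
    have "\<forall>b\<in>outputs. psd2 (pauli_povm b)"
      unfolding outputs_def pauli_povm_def by (auto simp: psd2_scaled_proj)
    moreover have "(\<Sum>b\<in>outputs. pauli_povm b) = mat 1"
      unfolding outputs_def pauli_povm_def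
      by (simp add: vec_eq_iff forall_2 scaled_proj_nth mat_def field_simps)
    ultimately show ?thesis unfolding povm2_def by blast
  qed
  ultimately show ?thesis unfolding Q_corr_def pauli_corr_def
    by (intro CollectI exI[of _ qubit_state] exI[of _ pauli_povm]) auto
qed

lemma pauli_corr_values:
  "pauli_corr 1 0 = 0"   "pauli_corr 2 0 = 1/6" "pauli_corr 4 0 = 1/6"
  "pauli_corr 1 1 = 1/3" "pauli_corr 2 1 = 1/6" "pauli_corr 4 1 = 1/6"
  "pauli_corr 1 2 = 1/6" "pauli_corr 2 2 = 1/3" "pauli_corr 4 2 = 1/6"
  "pauli_corr 1 3 = 1/6" "pauli_corr 2 3 = 1/6" "pauli_corr 4 3 = 1/3"
  by (simp_all add: pauli_corr_def inputs_def outputs_def qubit_state_def pauli_povm_def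
      trace_scaled_proj_mult)

lemma pauli_corr_increment_minor3:
  "minor3 (\<lambda>x b. pauli_corr b x - pauli_corr b 0) 1 2 3 1 2 4 = 1/108"
  unfolding minor3_def pauli_corr_values by simp

lemma pauli_corr_notin_C2_corr: "pauli_corr \<notin> C2_corr inputs outputs"
proof
  assume "pauli_corr \<in> C2_corr inputs outputs"
  then have "minor3 (\<lambda>x b. pauli_corr b x - pauli_corr b 0) 1 2 3 1 2 4 = 0"
    by (rule C2_corr_increment_minor3) (simp_all add: inputs_def outputs_def)
  then show False using pauli_corr_increment_minor3 by simp
qed

theorem theorem4:
  shows "\<exists>(X::nat set) (B::nat set) (\<beta>::corr \<Rightarrow> real).
           finite X \<and> X \<noteq> {} \<and> finite B \<and> B \<noteq> {} \<and>
           utility (Q_corr X B) \<beta> > utility (C2_corr X B) \<beta>"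
proof (intro exI conjI)
  show "finite inputs" "inputs \<noteq> {}" "finite outputs" "outputs \<noteq> {}"
    unfolding inputs_def outputs_def by auto
  show "utility (Q_corr inputs outputs) (\<lambda>Q. if Q = pauli_corr then 1 else 0)
      > utility (C2_corr inputs outputs) (\<lambda>Q. if Q = pauli_corr then 1 else 0)"
    using utility_indicator_less[OF pauli_corr_in_Q_corr pauli_corr_notin_C2_corr] .
qed

end
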